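(* Suppose the system is exponentially incrementally input/output-to-state stable as in the context, with constant $\eta\in[0,1)$. Let $Q,R\succ0$, let the stage cost be $l(x,w;(u,y))=|w|_Q^2+|y-h(x,u)|_R^2$, and let $t_1\le t_2$ be nonnegative integers. Then there exist $C_1,C_2,C_3>0$ such that $$|x_\tau-\hat x_\tau|^2\le C_1\eta^{\tau-t_1}|x_{t_1}-\hat x_{t_1}|^2+C_2\max_{j\in\{t_1,\dots,\tau-1\}}\{|w_j|^2,|v_j|^2\}+C_3J_{[t_1,t_2]}(\hat z_{t_1:t_2})$$ for all $\tau\in\{t_1,\dots,t_2\}$, all initial conditions $x_0,\hat x_0\in\mathcal{X}$, and all sequences $u\in\mathcal{U}^\infty$, $w,\hat w\in\mathcal{W}^\infty$, $v\in\mathcal{V}^\infty$, where $x_{j+1}=f(x_j,u_j,w_j)$, $y_j=h(x_j,u_j)+v_j$, $\hat x_{j+1}=f(\hat x_j,u_j,\hat w_j)$, $\hat z_j=(\hat x_j,\hat w_j)$ for all $j\ge0$ (the maximum over an empty index set, i.e. for $\tau=t_1$, is $0$).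
   Context: System: $x_{t+1}=f(x_t,u_t,w_t)$, $y_t=h(x_t,u_t)+v_t$ with $f,h$ continuous and known sets $\mathcal{X}\subseteq\mathbb{R}^n$, $\mathcal{U}$, $\mathcal{W}\ni0$, $\mathcal{V}$ with $f(\mathcal{X}\times\mathcal{U}\times\mathcal{W})\subseteq\mathcal{X}$; $d_j=(u_j,y_j)$. Performance criterion: $J_{[t_1,t_2]}(\hat z_{t_1:t_2})=\sum_{j=t_1}^{t_2-1}l(\hat z_j;d_j)$. $|x|_Q^2=x^\top Qx$. Exponential i-IOSS (assumed): there exist a continuous $U:\mathcal{X}\times\mathcal{X}\to\mathbb{R}_{\ge0}$, matrices $P_1,P_2,S_w,S_y\succ0$ and $\eta\in[0,1)$ such that $|x_1-x_2|_{P_1}^2\le U(x_1,x_2)\le|x_1-x_2|_{P_2}^2$ and $U(f(x_1,u,w_1),f(x_2,u,w_2))\le\eta U(x_1,x_2)+|w_1-w_2|_{S_w}^2+|h(x_1,u)-h(x_2,u)|_{S_y}^2$ for all $(x_1,u,w_1),(x_2,u,w_2)\in\mathcal{X}\times\mathcal{U}\times\mathcal{W}$. *)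

theory Defs
  imports "HOL-Analysis.Analysis"
begin

definition qnorm2 :: "real^'n^'n \<Rightarrow> real^'n \<Rightarrow> real" where
  "qnorm2 Q x = x \<bullet> (Q *v x)"

definition posdef :: "real^'n^'n \<Rightarrow> bool" where
  "posdef Q \<longleftrightarrow> transpose Q = Q \<and> (\<forall>x. x \<noteq> 0 \<longrightarrow> qnorm2 Q x > 0)"

definition noise_max :: "(nat \<Rightarrow> 'a::real_normed_vector) \<Rightarrow> (nat \<Rightarrow> 'b::real_normed_vector)
     \<Rightarrow> nat \<Rightarrow> nat \<Rightarrow> real" where
  "noise_max w v t1 tau =
     (if tau \<le> t1 then 0
      else Max ((\<lambda>j. (norm (w j))^2) ` {t1..<tau} \<union> (\<lambda>j. (norm (v j))^2) ` {t1..<tau}))"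

end

theory Submission
  imports Defs
begin

(* The i-IOSS Lyapunov function U(x_j, xh_j) contracts by eta up to the increments
   |w_j - wh_j|_Sw^2 + |h(x_j) - h(xh_j)|_Sy^2. Since h(x_j) - h(xh_j) = (y_j - h(xh_j)) - v_j
   and |a - b|^2 <= 2|a|^2 + 2|b|^2, each increment is bounded by the true noise (w_j, v_j) plus a
   multiple of the stage cost of the candidate (xh_j, wh_j). Unrolling the scalar recursion, the
   noise enters through a geometric series, bounded by its maximum over 1 - eta, and the cost
   terms through their sum; the bounds P1 <= U <= P2 translate the result back to squared norms. *)

lemma qnorm2_scaleR: "qnorm2 S (a *\<^sub>R z) = a^2 * qnorm2 S z"
  unfolding qnorm2_def by (simp add: matrix_vector_mult_scaleR power2_eq_square)

lemma qnorm2_minus: "qnorm2 S (- z) = qnorm2 S z"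
  using qnorm2_scaleR[of S "-1" z] by simp

lemma qnorm2_le_norm_power2:
  obtains K where "K > 0" "\<And>z. qnorm2 (S::real^'n^'n) z \<le> K * (norm z)^2"
proof -
  obtain K where K: "K > 0" "\<And>z. norm (S *v z) \<le> norm z * K"
    using bounded_linear.pos_bounded[OF matrix_vector_mul_bounded_linear[of S]] by blast
  have "qnorm2 S z \<le> K * (norm z)^2" for z
  proof -
    have "qnorm2 S z \<le> norm z * norm (S *v z)"
      unfolding qnorm2_def by (rule norm_cauchy_schwarz)
    also have "\<dots> \<le> norm z * (norm z * K)"
      using K(2) by (simp add: mult_left_mono)
    finally show ?thesis by (simp add: power2_eq_square algebra_simps)
  qed
  with K(1) show thesis by (rule that)
qed

lemma posdef_qnorm2_ge_norm_power2:
  assumes "posdef (S::real^'n^'n)"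
  obtains c where "c > 0" "\<And>z. c * (norm z)^2 \<le> qnorm2 S z"
proof -
  have "continuous_on (sphere 0 1) (qnorm2 S)"
    unfolding qnorm2_def by (intro continuous_intros linear_continuous_on matrix_vector_mul_bounded_linear)
  moreover have "sphere (0::real^'n) 1 \<noteq> {}" by simp
  ultimately obtain z0 where z0: "z0 \<in> sphere 0 1" "\<And>z. z \<in> sphere 0 1 \<Longrightarrow> qnorm2 S z0 \<le> qnorm2 S z"
    using continuous_attains_inf[OF compact_sphere] by blast
  have "z0 \<noteq> 0" using z0(1) by auto
  then have "qnorm2 S z0 > 0"
    using assms unfolding posdef_def by blast
  moreover have "qnorm2 S z0 * (norm z)^2 \<le> qnorm2 S z" for z
  proof (cases "z = 0")
    case True
    then show ?thesis by (simp add: qnorm2_def)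
  next
    case False
    then have "z /\<^sub>R norm z \<in> sphere 0 1" by simp
    moreover have "qnorm2 S z = (norm z)^2 * qnorm2 S (z /\<^sub>R norm z)"
      using False qnorm2_scaleR[of S "norm z" "z /\<^sub>R norm z"] by simp
    ultimately show ?thesis
      using z0(2) by (metis mult.commute mult_left_mono zero_le_power2)
  qed
  ultimately show thesis by (rule that)
qed

lemma posdef_qnorm2_nonneg:
  assumes "posdef S"
  shows "0 \<le> qnorm2 S z"
proof -
  obtain c where "c > 0" "c * (norm z)^2 \<le> qnorm2 S z"
    using posdef_qnorm2_ge_norm_power2[OF assms] by blast
  then show ?thesis
    by (meson order_trans mult_nonneg_nonneg less_imp_le zero_le_power2)
qed

lemma norm_diff_power2_le:
  fixes a b :: "'a::real_normed_vector"
  shows "(norm (a - b))^2 \<le> 2 * (norm a)^2 + 2 * (norm b)^2"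
proof -
  have "(norm (a - b))^2 \<le> (norm a + norm b)^2"
    by (simp add: norm_triangle_ineq4 power_mono)
  also have "\<dots> \<le> 2 * (norm a)^2 + 2 * (norm b)^2"
    using sum_squares_bound[of "norm a" "norm b"] by (simp add: power2_sum)
  finally show ?thesis .
qed

lemma qnorm2_diff_le_posdef:
  assumes "posdef Q"
  obtains A B where "A > 0" "B > 0"
    "\<And>a b. qnorm2 (S::real^'n^'n) (a - b) \<le> A * (norm a)^2 + B * qnorm2 Q b"
proof -
  obtain K where K: "K > 0" "\<And>z. qnorm2 S z \<le> K * (norm z)^2"
    using qnorm2_le_norm_power2 by blast
  obtain c where c: "c > 0" "\<And>z. c * (norm z)^2 \<le> qnorm2 Q z"
    using posdef_qnorm2_ge_norm_power2[OF assms] by blast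
  have "qnorm2 S (a - b) \<le> (2 * K) * (norm a)^2 + (2 * K / c) * qnorm2 Q b" for a b
  proof -
    have "qnorm2 S (a - b) \<le> K * (norm (a - b))^2" by (rule K(2))
    also have "\<dots> \<le> K * (2 * (norm a)^2 + 2 * (norm b)^2)"
      using K(1) norm_diff_power2_le by (simp add: mult_left_mono)
    also have "\<dots> \<le> K * (2 * (norm a)^2 + 2 * (qnorm2 Q b / c))"
      using K(1) c by (intro mult_left_mono add_left_mono) (simp_all add: field_simps)
    also have "\<dots> = (2 * K) * (norm a)^2 + (2 * K / c) * qnorm2 Q b"
      by (simp add: algebra_simps)
    finally show ?thesis .
  qed
  moreover have "2 * K > 0" "2 * K / c > 0" using K(1) c(1) by simp_all
  ultimately show thesis using that by blast
qed

lemma geometric_dissipation_bound: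
  fixes e b :: "nat \<Rightarrow> real"
  assumes eta: "0 \<le> \<eta>" "\<eta> < 1" and "0 \<le> \<alpha>"
    and step: "\<And>i. i < k \<Longrightarrow> e (Suc i) \<le> \<eta> * e i + \<alpha> + b i"
    and b_nonneg: "\<And>i. i < k \<Longrightarrow> 0 \<le> b i"
  shows "e k \<le> \<eta> ^ k * e 0 + \<alpha> / (1 - \<eta>) + (\<Sum>i<k. b i)"
  using step b_nonneg
proof (induction k)
  case 0
  then show ?case using eta \<open>0 \<le> \<alpha>\<close> by simp
next
  case (Suc k)
  have IH: "e k \<le> \<eta> ^ k * e 0 + \<alpha> / (1 - \<eta>) + (\<Sum>i<k. b i)"
    using Suc by simp
  have "0 \<le> (\<Sum>i<k. b i)" using Suc.prems(2) by (intro sum_nonneg) simp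
  then have "\<eta> * (\<Sum>i<k. b i) \<le> (\<Sum>i<k. b i)"
    using eta by (simp add: mult_left_le_one_le)
  moreover have "\<eta> * (\<alpha> / (1 - \<eta>)) + \<alpha> = \<alpha> / (1 - \<eta>)"
    using eta by (simp add: field_simps)
  moreover have "e (Suc k) \<le> \<eta> * e k + \<alpha> + b k" using Suc.prems(1) by simp
  moreover have "\<eta> * e k \<le> \<eta> * (\<eta> ^ k * e 0 + \<alpha> / (1 - \<eta>) + (\<Sum>i<k. b i))"
    using IH eta by (simp add: mult_left_mono)
  ultimately show ?case by (simp add: algebra_simps)
qed

lemma noise_max_ge:
  assumes "t1 \<le> j" "j < \<tau>"
  shows "(norm (w j))^2 \<le> noise_max w v t1 \<tau>" "(norm (v j))^2 \<le> noise_max w v t1 \<tau>"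
  using assms unfolding noise_max_def by (auto intro!: Max_ge)

lemma noise_max_nonneg: "0 \<le> noise_max w v t1 \<tau>"
proof (cases "t1 < \<tau>")
  case True
  then have "(norm (w t1))^2 \<le> noise_max w v t1 \<tau>"
    by (intro noise_max_ge) simp_all
  then show ?thesis by (meson order_trans zero_le_power2)
qed (simp add: noise_max_def)

lemma dissipation_bound_noise_max:
  fixes e l :: "nat \<Rightarrow> real"
    and w :: "nat \<Rightarrow> 'a::real_normed_vector" and v :: "nat \<Rightarrow> 'b::real_normed_vector"
  assumes eta: "0 \<le> \<eta>" "\<eta> < 1" and A: "0 \<le> A" and B: "0 \<le> B"
    and step: "\<And>j. e (Suc j) \<le> \<eta> * e j + A * ((norm (w j))^2 + (norm (v j))^2) + B * l j"
    and l_nonneg: "\<And>j. 0 \<le> l j" and "t1 \<le> \<tau>" "\<tau> \<le> t2"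
  shows "e \<tau> \<le> \<eta> ^ (\<tau> - t1) * e t1 + 2 * A * noise_max w v t1 \<tau> / (1 - \<eta>)
    + B * (\<Sum>j\<in>{t1..<t2}. l j)"
proof -
  define N where "N = noise_max w v t1 \<tau>"
  define k where "k = \<tau> - t1"
  have "e (t1 + k) \<le> \<eta> ^ k * e (t1 + 0) + 2 * A * N / (1 - \<eta>) + (\<Sum>i<k. B * l (t1 + i))"
  proof (rule geometric_dissipation_bound[where e = "\<lambda>i. e (t1 + i)" and b = "\<lambda>i. B * l (t1 + i)"])
    show "0 \<le> 2 * A * N" using A noise_max_nonneg[of w v t1 \<tau>] by (simp add: N_def)
    fix i
    assume "i < k"
    then have i: "t1 + i < \<tau>" by (simp add: k_def)
    then have "(norm (w (t1 + i)))^2 + (norm (v (t1 + i)))^2 \<le> 2 * N"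
      using noise_max_ge[where w = w and v = v, OF le_add1 i] unfolding N_def by linarith
    then have "A * ((norm (w (t1 + i)))^2 + (norm (v (t1 + i)))^2) \<le> A * (2 * N)"
      using A by (rule mult_left_mono)
    then show "e (t1 + Suc i) \<le> \<eta> * e (t1 + i) + 2 * A * N + B * l (t1 + i)"
      using step[of "t1 + i"] by simp
  qed (use eta B l_nonneg in auto)
  moreover have "(\<Sum>i<k. B * l (t1 + i)) = B * (\<Sum>j\<in>{t1..<\<tau>}. l j)"
    using \<open>t1 \<le> \<tau>\<close> sum.shift_bounds_nat_ivl[of l 0 t1 k]
    by (simp add: k_def lessThan_atLeast0 add.commute sum_distrib_left)
  moreover have "B * (\<Sum>j\<in>{t1..<\<tau>}. l j) \<le> B * (\<Sum>j\<in>{t1..<t2}. l j)"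
    using \<open>\<tau> \<le> t2\<close> l_nonneg B by (intro mult_left_mono sum_mono2) auto
  ultimately show ?thesis
    using \<open>t1 \<le> \<tau>\<close> by (simp add: N_def k_def)
qed

lemma iIOSS_increment_le_stage_cost:
  assumes U_decr: "\<And>x1 x2 u w1 w2. x1 \<in> X \<Longrightarrow> x2 \<in> X \<Longrightarrow> u \<in> UU \<Longrightarrow> w1 \<in> W \<Longrightarrow> w2 \<in> W \<Longrightarrow>
        U (f x1 u w1) (f x2 u w2) \<le> \<eta> * U x1 x2 + qnorm2 Sw (w1 - w2) + qnorm2 Sy (h x1 u - h x2 u)"
    and Q: "posdef Q" and R: "posdef R"
  obtains A B where "A > 0" "B > 0"
    "\<And>x1 x2 u w1 w2 v. x1 \<in> X \<Longrightarrow> x2 \<in> X \<Longrightarrow> u \<in> UU \<Longrightarrow> w1 \<in> W \<Longrightarrow> w2 \<in> W \<Longrightarrow>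
       U (f x1 u w1) (f x2 u w2) \<le> \<eta> * U x1 x2 + A * ((norm w1)^2 + (norm v)^2)
         + B * (qnorm2 Q w2 + qnorm2 R (h x1 u + v - h x2 u))"
proof -
  obtain Aw Bw where Aw: "Aw > 0" and Bw: "Bw > 0"
    and Sw_le: "\<And>a b. qnorm2 Sw (a - b) \<le> Aw * (norm a)^2 + Bw * qnorm2 Q b"
    using qnorm2_diff_le_posdef[OF Q] by blast
  obtain Ay By where Ay: "Ay > 0" and By: "By > 0"
    and Sy_le: "\<And>a b. qnorm2 Sy (a - b) \<le> Ay * (norm a)^2 + By * qnorm2 R b"
    using qnorm2_diff_le_posdef[OF R] by blast
  have "U (f x1 u w1) (f x2 u w2) \<le> \<eta> * U x1 x2 + (Aw + Ay) * ((norm w1)^2 + (norm v)^2)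
         + (Bw + By) * (qnorm2 Q w2 + qnorm2 R (h x1 u + v - h x2 u))"
    if "x1 \<in> X" "x2 \<in> X" "u \<in> UU" "w1 \<in> W" "w2 \<in> W" for x1 x2 u w1 w2 v
  proof -
    let ?r = "h x1 u + v - h x2 u"
    have "h x1 u - h x2 u = - (v - ?r)" by simp
    then have "qnorm2 Sy (h x1 u - h x2 u) \<le> Ay * (norm v)^2 + By * qnorm2 R ?r"
      using Sy_le by (simp only: qnorm2_minus)
    moreover have "0 \<le> Ay * (norm w1)^2" "0 \<le> Aw * (norm v)^2"
      "0 \<le> By * qnorm2 Q w2" "0 \<le> Bw * qnorm2 R ?r"
      using Aw Ay Bw By posdef_qnorm2_nonneg[OF Q] posdef_qnorm2_nonneg[OF R] by simp_all
    ultimately show ?thesis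
      using U_decr[OF that] Sw_le[of w1 w2] unfolding ring_distribs by linarith
  qed
  moreover have "Aw + Ay > 0" "Bw + By > 0" using Aw Ay Bw By by simp_all
  ultimately show thesis using that by blast
qed

theorem proposition3:
  fixes f :: "real^'n \<Rightarrow> 'u::topological_space \<Rightarrow> real^'m \<Rightarrow> real^'n"
    and h :: "real^'n \<Rightarrow> 'u \<Rightarrow> real^'p"
    and X :: "(real^'n) set" and UU :: "'u set" and W :: "(real^'m) set" and V :: "(real^'p) set"
    and U :: "real^'n \<Rightarrow> real^'n \<Rightarrow> real"
    and P1 P2 :: "real^'n^'n" and Sw :: "real^'m^'m" and Sy :: "real^'p^'p"
    and \<eta> :: real
    and Q :: "real^'m^'m" and R :: "real^'p^'p"
    and t1 t2 :: nat
  assumes f_cont: "continuous_on (X \<times> UU \<times> W) (\<lambda>(x, u, w). f x u w)"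
    and h_cont: "continuous_on (X \<times> UU) (\<lambda>(x, u). h x u)"
    and W0: "0 \<in> W"
    and f_inv: "\<And>x u w. x \<in> X \<Longrightarrow> u \<in> UU \<Longrightarrow> w \<in> W \<Longrightarrow> f x u w \<in> X"
    and U_cont: "continuous_on (X \<times> X) (\<lambda>(x1, x2). U x1 x2)"
    and U_nonneg: "\<And>x1 x2. x1 \<in> X \<Longrightarrow> x2 \<in> X \<Longrightarrow> U x1 x2 \<ge> 0"
    and P1: "posdef P1" and P2: "posdef P2" and Sw: "posdef Sw" and Sy: "posdef Sy"
    and eta: "0 \<le> \<eta>" "\<eta> < 1"
    and U_bounds: "\<And>x1 x2. x1 \<in> X \<Longrightarrow> x2 \<in> X \<Longrightarrow>
        qnorm2 P1 (x1 - x2) \<le> U x1 x2 \<and> U x1 x2 \<le> qnorm2 P2 (x1 - x2)"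
    and U_decr: "\<And>x1 x2 u w1 w2. x1 \<in> X \<Longrightarrow> x2 \<in> X \<Longrightarrow> u \<in> UU \<Longrightarrow> w1 \<in> W \<Longrightarrow> w2 \<in> W \<Longrightarrow>
        U (f x1 u w1) (f x2 u w2) \<le> \<eta> * U x1 x2 + qnorm2 Sw (w1 - w2) + qnorm2 Sy (h x1 u - h x2 u)"
    and Q: "posdef Q" and R: "posdef R"
    and t12: "t1 \<le> t2"
  shows "\<exists>C1 C2 C3. C1 > 0 \<and> C2 > 0 \<and> C3 > 0 \<and>
    (\<forall>x xh u w wh v y. x 0 \<in> X \<and> xh 0 \<in> X \<and> (\<forall>j. u j \<in> UU) \<and> (\<forall>j. w j \<in> W) \<and>
        (\<forall>j. wh j \<in> W) \<and> (\<forall>j. v j \<in> V) \<and>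
        (\<forall>j. x (Suc j) = f (x j) (u j) (w j)) \<and> (\<forall>j. y j = h (x j) (u j) + v j) \<and>
        (\<forall>j. xh (Suc j) = f (xh j) (u j) (wh j)) \<longrightarrow>
      (\<forall>\<tau>\<in>{t1..t2}.
        (norm (x \<tau> - xh \<tau>))^2 \<le> C1 * \<eta> ^ (\<tau> - t1) * (norm (x t1 - xh t1))^2
          + C2 * noise_max w v t1 \<tau>
          + C3 * (\<Sum>j\<in>{t1..<t2}. qnorm2 Q (wh j) + qnorm2 R (y j - h (xh j) (u j)))))"
proof -
  obtain A B where A: "A > 0" and B: "B > 0" and increment: "\<And>x1 x2 u w1 w2 v.
      x1 \<in> X \<Longrightarrow> x2 \<in> X \<Longrightarrow> u \<in> UU \<Longrightarrow> w1 \<in> W \<Longrightarrow> w2 \<in> W \<Longrightarrow>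
      U (f x1 u w1) (f x2 u w2) \<le> \<eta> * U x1 x2 + A * ((norm w1)^2 + (norm v)^2)
        + B * (qnorm2 Q w2 + qnorm2 R (h x1 u + v - h x2 u))"
    using iIOSS_increment_le_stage_cost[where f = f and h = h and U = U, OF U_decr Q R] by blast
  obtain p1 where p1: "p1 > 0" "\<And>z. p1 * (norm z)^2 \<le> qnorm2 P1 z"
    using posdef_qnorm2_ge_norm_power2[OF P1] by blast
  obtain p2 where p2: "p2 > 0" "\<And>z. qnorm2 P2 z \<le> p2 * (norm z)^2"
    using qnorm2_le_norm_power2 by blast
  show ?thesis
  proof (intro exI conjI allI impI ballI)
    show "p2 / p1 > 0" "2 * A / ((1 - \<eta>) * p1) > 0" "B / p1 > 0"
      using A B p1 p2 eta by simp_all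
    fix x xh u w wh v y \<tau>
    assume traj: "x 0 \<in> X \<and> xh 0 \<in> X \<and> (\<forall>j. u j \<in> UU) \<and> (\<forall>j. w j \<in> W) \<and>
        (\<forall>j. wh j \<in> W) \<and> (\<forall>j. v j \<in> V) \<and>
        (\<forall>j. x (Suc j) = f (x j) (u j) (w j)) \<and> (\<forall>j. y j = h (x j) (u j) + v j) \<and>
        (\<forall>j. xh (Suc j) = f (xh j) (u j) (wh j))"
      and \<tau>: "\<tau> \<in> {t1..t2}"
    have x: "x j \<in> X" and xh: "xh j \<in> X" for j
      by (induction j) (use traj f_inv in auto)
    define cost where "cost j = qnorm2 Q (wh j) + qnorm2 R (y j - h (xh j) (u j))" for j
    have "U (x (Suc j)) (xh (Suc j)) \<le> \<eta> * U (x j) (xh j)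
        + A * ((norm (w j))^2 + (norm (v j))^2) + B * cost j" for j
      using increment[OF x[of j] xh[of j], of "u j" "w j" "wh j" "v j"] traj by (simp add: cost_def)
    moreover have "0 \<le> cost j" for j
      using posdef_qnorm2_nonneg[OF Q] posdef_qnorm2_nonneg[OF R] by (simp add: cost_def)
    ultimately have "U (x \<tau>) (xh \<tau>) \<le> \<eta> ^ (\<tau> - t1) * U (x t1) (xh t1)
        + 2 * A * noise_max w v t1 \<tau> / (1 - \<eta>) + B * (\<Sum>j\<in>{t1..<t2}. cost j)"
      using \<tau> eta A B by (intro dissipation_bound_noise_max) auto
    moreover have "p1 * (norm (x \<tau> - xh \<tau>))^2 \<le> U (x \<tau>) (xh \<tau>)"
      using U_bounds[OF x xh] p1(2) order_trans by blast
    moreover have "\<eta> ^ (\<tau> - t1) * U (x t1) (xh t1) \<le> \<eta> ^ (\<tau> - t1) * (p2 * (norm (x t1 - xh t1))^2)"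
      using U_bounds[OF x xh] p2(2) eta by (intro mult_left_mono) (auto intro: order_trans)
    ultimately have "p1 * (norm (x \<tau> - xh \<tau>))^2 \<le> p2 * \<eta> ^ (\<tau> - t1) * (norm (x t1 - xh t1))^2
        + 2 * A * noise_max w v t1 \<tau> / (1 - \<eta>) + B * (\<Sum>j\<in>{t1..<t2}. cost j)"
      by (simp add: algebra_simps)
    also have "\<dots> = p1 * (p2 / p1 * \<eta> ^ (\<tau> - t1) * (norm (x t1 - xh t1))^2
        + 2 * A / ((1 - \<eta>) * p1) * noise_max w v t1 \<tau> + B / p1 * (\<Sum>j\<in>{t1..<t2}. cost j))"
      using p1(1) eta(2) by (simp add: field_simps)
    finally show "(norm (x \<tau> - xh \<tau>))^2 \<le> p2 / p1 * \<eta> ^ (\<tau> - t1) * (norm (x t1 - xh t1))^2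
        + 2 * A / ((1 - \<eta>) * p1) * noise_max w v t1 \<tau>
        + B / p1 * (\<Sum>j\<in>{t1..<t2}. qnorm2 Q (wh j) + qnorm2 R (y j - h (xh j) (u j)))"
      using p1(1) by (simp add: cost_def)
  qed
qed

end
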